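(* Let $n \ge 1$ and let $G$ be a (nonempty) subgraph of the hypercube $Q_n$ with average degree $d$. Then $G$ contains a geodesic of length at least $d$.
   Context: The hypercube $Q_n$ has vertex set $\{0,1\}^n$, two vertices being adjacent iff they differ in exactly one coordinate; the direction of an edge is that coordinate. A path in $Q_n$ is a geodesic if no two of its edges have the same direction. The length of a path is its number of edges. The average degree of $G$ is $2|E(G)|/|V(G)|$. *)

theory Defs
  imports Complex_Main
begin

definition cube_vertices :: "nat \<Rightarrow> bool list set" where
  "cube_vertices n = {xs. length xs = n}"

definition cube_adj :: "bool list \<Rightarrow> bool list \<Rightarrow> bool" where
  "cube_adj u v \<longleftrightarrow> length u = length v \<and> card {i. i < length u \<and> u ! i \<noteq> v ! i} = 1"

definition cube_subgraph :: "nat \<Rightarrow> bool list set \<Rightarrow> bool list set set \<Rightarrow> bool" where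
  "cube_subgraph n V E \<longleftrightarrow> V \<subseteq> cube_vertices n \<and>
     E \<subseteq> {{u, v} | u v. u \<in> V \<and> v \<in> V \<and> cube_adj u v}"

definition edge_dir :: "bool list \<Rightarrow> bool list \<Rightarrow> nat" where
  "edge_dir u v = (THE i. i < length u \<and> u ! i \<noteq> v ! i)"

text \<open>A path in G given by its vertex list; its length is length p - 1.\<close>
definition is_path :: "bool list set \<Rightarrow> bool list set set \<Rightarrow> bool list list \<Rightarrow> bool" where
  "is_path V E p \<longleftrightarrow> p \<noteq> [] \<and> distinct p \<and> set p \<subseteq> V \<and>
     (\<forall>j < length p - 1. {p ! j, p ! Suc j} \<in> E)"

definition is_geodesic :: "bool list set \<Rightarrow> bool list set set \<Rightarrow> bool list list \<Rightarrow> bool" where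
  "is_geodesic V E p \<longleftrightarrow> is_path V E p \<and>
     inj_on (\<lambda>j. edge_dir (p ! j) (p ! Suc j)) {..<length p - 1}"

definition avg_degree :: "bool list set \<Rightarrow> bool list set set \<Rightarrow> real" where
  "avg_degree V E = 2 * real (card E) / real (card V)"

end

theory Submission
  imports Defs
begin

text \<open>Induct on a set \<open>D\<close> of directions: every vertex \<open>v\<close> is the start of a geodesic using
  only directions in \<open>D\<close>, such that the total length of these geodesics is at least twice the
  number of edges with direction in \<open>D\<close>. When a new direction \<open>k\<close> is added, each endpoint \<open>v\<close>
  of a \<open>k\<close>-edge prepends that edge to the geodesic of its neighbour \<open>flip k v\<close>; the latter never
  uses direction \<open>k\<close>, so it stays in the opposite half-cube and the result is again a geodesic.
  Each \<open>k\<close>-edge has two endpoints, so the total length grows by twice the number of \<open>k\<close>-edges.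
  With all directions the total length is at least \<open>2|E| = d|V|\<close>, so some geodesic has length
  at least \<open>d\<close>.\<close>

definition flip :: "nat \<Rightarrow> bool list \<Rightarrow> bool list" where
  "flip k v = v[k := \<not> v ! k]"

lemma length_flip [simp]: "length (flip k v) = length v"
  by (simp add: flip_def)

lemma flip_flip [simp]: "flip k (flip k v) = v"
  by (cases "k < length v") (auto simp: flip_def list_update_beyond)

lemma flip_nth_same: "k < length v \<Longrightarrow> flip k v ! k = (\<not> v ! k)"
  by (simp add: flip_def)

lemma flip_differs_at: "k < length v \<Longrightarrow> {i. i < length v \<and> v ! i \<noteq> flip k v ! i} = {k}"
  by (auto simp: flip_def nth_list_update)

lemma cube_adj_flip: "k < length v \<Longrightarrow> cube_adj v (flip k v)"
  using flip_differs_at[of k v] by (simp add: cube_adj_def)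

lemma cube_adj_differs_at:
  assumes "cube_adj u v"
  shows "{i. i < length u \<and> u ! i \<noteq> v ! i} = {edge_dir u v}"
proof -
  from assms have "card {i. i < length u \<and> u ! i \<noteq> v ! i} = 1"
    unfolding cube_adj_def by blast
  then obtain i where i: "{i. i < length u \<and> u ! i \<noteq> v ! i} = {i}"
    by (rule card_1_singletonE)
  have "edge_dir u v = i"
    unfolding edge_dir_def by (rule the_equality) (use i in auto)
  with i show ?thesis by simp
qed

lemma edge_dir_flip: "k < length v \<Longrightarrow> edge_dir v (flip k v) = k"
  using cube_adj_differs_at[OF cube_adj_flip, of k v] flip_differs_at[of k v] by auto

lemma cube_adj_sym:
  assumes "cube_adj u v"
  shows "cube_adj v u"
proof -
  have "length u = length v" using assms by (simp add: cube_adj_def)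
  moreover have "{i. i < length v \<and> v ! i \<noteq> u ! i} = {i. i < length u \<and> u ! i \<noteq> v ! i}"
    using calculation by auto
  ultimately show ?thesis using assms by (simp add: cube_adj_def)
qed

lemma edge_dir_commute: "length u = length v \<Longrightarrow> edge_dir u v = edge_dir v u"
  unfolding edge_dir_def by metis

lemma edge_dir_less: "cube_adj u v \<Longrightarrow> edge_dir u v < length u"
  using cube_adj_differs_at by blast

lemma cube_adj_nth_eq: "cube_adj u v \<Longrightarrow> i < length u \<Longrightarrow> i \<noteq> edge_dir u v \<Longrightarrow> u ! i = v ! i"
  using cube_adj_differs_at by blast

lemma cube_adj_neq: "cube_adj u v \<Longrightarrow> u \<noteq> v"
  using cube_adj_differs_at by blast

lemma cube_adj_eq_flip:
  assumes "cube_adj u v"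
  shows "v = flip (edge_dir u v) u"
proof (rule nth_equalityI)
  show "length v = length (flip (edge_dir u v) u)"
    using assms by (simp add: cube_adj_def)
  have "u ! edge_dir u v \<noteq> v ! edge_dir u v"
    using cube_adj_differs_at[OF assms] by blast
  then show "v ! i = flip (edge_dir u v) u ! i" if "i < length v" for i
    using that assms cube_adj_nth_eq[OF assms, of i]
    by (cases "i = edge_dir u v") (auto simp: flip_def cube_adj_def)
qed

lemma cube_subgraph_edge:
  assumes "cube_subgraph n V E" "{a, b} \<in> E"
  shows "cube_adj a b" "a \<in> V" "b \<in> V"
proof -
  from assms obtain u v where "{a, b} = {u, v}" "u \<in> V" "v \<in> V" "cube_adj u v"
    unfolding cube_subgraph_def by blast
  then show "cube_adj a b" "a \<in> V" "b \<in> V"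
    using cube_adj_sym by (auto simp: doubleton_eq_iff)
qed

lemma cube_subgraph_length: "cube_subgraph n V E \<Longrightarrow> v \<in> V \<Longrightarrow> length v = n"
  unfolding cube_subgraph_def cube_vertices_def by blast

lemma cube_subgraph_finite:
  assumes "cube_subgraph n V E"
  shows "finite V" "finite E"
proof -
  have "V \<subseteq> {xs. set xs \<subseteq> UNIV \<and> length xs = n}"
    using assms unfolding cube_subgraph_def cube_vertices_def by auto
  then show "finite V"
    using finite_lists_length_eq[of "UNIV :: bool set" n] finite_subset by auto
  moreover have "E \<subseteq> Pow V"
    using assms unfolding cube_subgraph_def by blast
  ultimately show "finite E"
    by (meson finite_Pow_iff finite_subset)
qed

definition path_dirs :: "bool list list \<Rightarrow> nat list" where
  "path_dirs p = map (\<lambda>j. edge_dir (p ! j) (p ! Suc j)) [0..<length p - 1]"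

lemma path_dirs_Cons: "q \<noteq> [] \<Longrightarrow> path_dirs (v # q) = edge_dir v (hd q) # path_dirs q"
  by (cases q) (simp_all add: path_dirs_def upt_conv_Cons map_Suc_upt[symmetric] del: upt_Suc)

lemma is_geodesic_iff_distinct_dirs:
  "is_geodesic V E p \<longleftrightarrow> is_path V E p \<and> distinct (path_dirs p)"
  by (simp add: is_geodesic_def path_dirs_def distinct_map atLeast0LessThan)

lemma is_path_Cons:
  "q \<noteq> [] \<Longrightarrow> is_path V E (v # q) \<longleftrightarrow> v \<in> V \<and> v \<notin> set q \<and> {v, hd q} \<in> E \<and> is_path V E q"
  by (cases q) (auto simp: is_path_def less_Suc_eq_0_disj)

definition geodesic_in_dirs ::
    "bool list set \<Rightarrow> bool list set set \<Rightarrow> nat set \<Rightarrow> bool list list \<Rightarrow> bool" where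
  "geodesic_in_dirs V E D p \<longleftrightarrow> is_geodesic V E p \<and> set (path_dirs p) \<subseteq> D"

lemma path_coord_const:
  assumes "cube_subgraph n V E" "is_path V E p" "set (path_dirs p) \<subseteq> D" "k \<notin> D" "k < n"
    and "w \<in> set p"
  shows "w ! k = hd p ! k"
  using assms(2,3,6)
proof (induction p arbitrary: w)
  case Nil
  then show ?case by simp
next
  case (Cons v q)
  show ?case
  proof (cases "q = []")
    case True
    with Cons.prems show ?thesis by simp
  next
    case False
    have edge: "{v, hd q} \<in> E" and q: "is_path V E q" and dirs: "set (path_dirs q) \<subseteq> D"
      and "edge_dir v (hd q) \<in> D"
      using Cons.prems False by (simp_all add: is_path_Cons path_dirs_Cons)
    then have "edge_dir v (hd q) \<noteq> k" using assms(4) by blast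
    moreover have "k < length v"
      using cube_subgraph_edge(2)[OF assms(1) edge] cube_subgraph_length[OF assms(1)] assms(5)
      by simp
    ultimately have "v ! k = hd q ! k"
      using cube_adj_nth_eq[OF cube_subgraph_edge(1)[OF assms(1) edge]] by simp
    with Cons.IH[OF q dirs] Cons.prems(3) show ?thesis by auto
  qed
qed

lemma geodesic_in_dirs_Cons:
  assumes sub: "cube_subgraph n V E" and q: "geodesic_in_dirs V E D q"
    and "k \<notin> D" "k < n" "hd q = flip k v" "v \<in> V" "{v, flip k v} \<in> E"
  shows "geodesic_in_dirs V E (insert k D) (v # q)"
proof -
  have path: "is_path V E q" and dirs: "set (path_dirs q) \<subseteq> D" "distinct (path_dirs q)"
    using q by (simp_all add: geodesic_in_dirs_def is_geodesic_iff_distinct_dirs)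
  have q_ne: "q \<noteq> []" using path by (simp add: is_path_def)
  have lv: "k < length v" using cube_subgraph_length[OF sub \<open>v \<in> V\<close>] \<open>k < n\<close> by simp
  have "v \<notin> set q"
  proof
    assume "v \<in> set q"
    then have "v ! k = flip k v ! k"
      using path_coord_const[OF sub path dirs(1) \<open>k \<notin> D\<close> \<open>k < n\<close>] \<open>hd q = flip k v\<close> by metis
    with lv show False by (simp add: flip_nth_same)
  qed
  moreover have "path_dirs (v # q) = k # path_dirs q"
    using q_ne \<open>hd q = flip k v\<close> edge_dir_flip[OF lv] by (simp add: path_dirs_Cons)
  ultimately show ?thesis
    using assms q_ne path dirs
    by (auto simp: geodesic_in_dirs_def is_geodesic_iff_distinct_dirs is_path_Cons)
qed

definition edges_along :: "bool list set set \<Rightarrow> nat set \<Rightarrow> bool list set set" where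
  "edges_along E D = {e \<in> E. \<exists>u v. e = {u, v} \<and> cube_adj u v \<and> edge_dir u v \<in> D}"

lemma edges_along_dir:
  assumes "e \<in> edges_along E D" "e = {a, b}" "cube_adj a b"
  shows "edge_dir a b \<in> D"
proof -
  from assms obtain u v where "e = {u, v}" "cube_adj u v" "edge_dir u v \<in> D"
    unfolding edges_along_def by blast
  with assms show ?thesis
    by (metis cube_adj_def edge_dir_commute doubleton_eq_iff)
qed

lemma card_edges_along_insert:
  assumes "finite E" "k \<notin> D"
  shows "card (edges_along E (insert k D)) = card (edges_along E D) + card (edges_along E {k})"
proof -
  have fin: "finite (edges_along E D')" for D'
    using assms(1) unfolding edges_along_def by simp
  have "edges_along E D \<inter> edges_along E {k} = {}"
    using edges_along_dir assms(2) unfolding edges_along_def by blast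
  moreover have "edges_along E (insert k D) = edges_along E D \<union> edges_along E {k}"
    unfolding edges_along_def by blast
  ultimately show ?thesis
    using card_Un_disjoint[OF fin fin] by simp
qed

lemma edges_along_all:
  assumes sub: "cube_subgraph n V E"
  shows "edges_along E {..<n} = E"
proof -
  have "edge_dir u v < n" if "u \<in> V" "cube_adj u v" for u v
    using edge_dir_less[OF that(2)] cube_subgraph_length[OF sub that(1)] by simp
  then show ?thesis
    using sub unfolding edges_along_def cube_subgraph_def by blast
qed

lemma edges_along_single_eq:
  assumes "e \<in> edges_along E {k}" "x \<in> e"
  shows "e = {x, flip k x}"
proof -
  from assms obtain u v where uv: "e = {u, v}" "cube_adj u v" "edge_dir u v = k"
    unfolding edges_along_def by blast
  have "v = flip k u" using cube_adj_eq_flip[OF uv(2)] uv(3) by simp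
  moreover have "u = flip k v"
    using cube_adj_eq_flip[OF cube_adj_sym[OF uv(2)]] uv(2,3) edge_dir_commute[of u v]
    unfolding cube_adj_def by simp
  ultimately show ?thesis using uv assms(2) by auto
qed

lemma card_endpoints_along:
  assumes sub: "cube_subgraph n V E" and "k < n"
  shows "card {v \<in> V. {v, flip k v} \<in> E} = 2 * card (edges_along E {k})"
proof -
  have "\<Union>(edges_along E {k}) = {v \<in> V. {v, flip k v} \<in> E}"
  proof (intro equalityI subsetI)
    fix x assume "x \<in> \<Union>(edges_along E {k})"
    then obtain e where e: "e \<in> edges_along E {k}" "x \<in> e" by blast
    then have "e = {x, flip k x}" "e \<in> E"
      using edges_along_single_eq unfolding edges_along_def by blast+
    then show "x \<in> {v \<in> V. {v, flip k v} \<in> E}"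
      using cube_subgraph_edge(2)[OF sub] by auto
  next
    fix x assume x: "x \<in> {v \<in> V. {v, flip k v} \<in> E}"
    then have "k < length x" using cube_subgraph_length[OF sub] \<open>k < n\<close> by auto
    then have "{x, flip k x} \<in> edges_along E {k}"
      using x cube_adj_flip edge_dir_flip unfolding edges_along_def by blast
    then show "x \<in> \<Union>(edges_along E {k})" by blast
  qed
  moreover have "pairwise disjnt (edges_along E {k})"
  proof (rule pairwiseI)
    fix a b assume "a \<in> edges_along E {k}" "b \<in> edges_along E {k}" "a \<noteq> b"
    then show "disjnt a b"
      using edges_along_single_eq unfolding disjnt_def by blast
  qed
  moreover have "finite e" "card e = 2" if "e \<in> edges_along E {k}" for e
    using that cube_adj_neq unfolding edges_along_def by auto
  ultimately show ?thesis
    using card_Union_disjoint[of "edges_along E {k}"] by simp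
qed

text \<open>Prepending \<open>v\<close> to the list of its partner \<open>\<tau> v\<close> for all \<open>v \<in> S\<close> adds \<open>card S\<close> to
  the total length, because \<open>\<tau>\<close> permutes \<open>S\<close>.\<close>
lemma sum_length_Cons_involution:
  fixes f :: "'a \<Rightarrow> 'a list"
  assumes "finite V" "S \<subseteq> V" "\<And>v. v \<in> S \<Longrightarrow> \<tau> v \<in> S" "\<And>v. v \<in> S \<Longrightarrow> \<tau> (\<tau> v) = v"
    and "\<And>v. v \<in> V \<Longrightarrow> f v \<noteq> []"
  shows "(\<Sum>v\<in>V. length (if v \<in> S then v # f (\<tau> v) else f v) - 1)
           = (\<Sum>v\<in>V. length (f v) - 1) + card S"
proof -
  define \<sigma> where "\<sigma> v = (if v \<in> S then \<tau> v else v)" for v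
  have "length (if v \<in> S then v # f (\<tau> v) else f v) - 1
          = (length (f (\<sigma> v)) - 1) + (if v \<in> S then 1 else 0)" if "v \<in> V" for v
    using that assms(2) assms(3)[of v] assms(5)[of "\<tau> v"] by (cases "v \<in> S") (auto simp: \<sigma>_def)
  then have "(\<Sum>v\<in>V. length (if v \<in> S then v # f (\<tau> v) else f v) - 1)
               = (\<Sum>v\<in>V. length (f (\<sigma> v)) - 1) + card S"
    using assms(1,2) by (simp add: sum.distrib sum.If_cases Int_absorb1)
  also have "(\<Sum>v\<in>V. length (f (\<sigma> v)) - 1) = (\<Sum>v\<in>V. length (f v) - 1)"
    by (rule sum.reindex_bij_witness[of _ \<sigma> \<sigma>]) (use assms(2-4) in \<open>auto simp: \<sigma>_def\<close>)
  finally show ?thesis .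
qed

lemma geodesics_in_dirs_total_length:
  assumes sub: "cube_subgraph n V E" and "finite D" "D \<subseteq> {..<n}"
  shows "\<exists>f. (\<forall>v\<in>V. geodesic_in_dirs V E D (f v) \<and> hd (f v) = v) \<and>
           2 * card (edges_along E D) \<le> (\<Sum>v\<in>V. length (f v) - 1)"
  using assms(2,3)
proof (induction D rule: finite_induct)
  case empty
  have "geodesic_in_dirs V E {} [v]" if "v \<in> V" for v
    using that by (simp add: geodesic_in_dirs_def is_geodesic_def is_path_def path_dirs_def)
  moreover have "edges_along E {} = {}" unfolding edges_along_def by blast
  ultimately show ?case by (intro exI[of _ "\<lambda>v. [v]"]) auto
next
  case (insert k D)
  have "k < n" using insert.prems by auto
  obtain f where f: "\<forall>v\<in>V. geodesic_in_dirs V E D (f v) \<and> hd (f v) = v"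
    and f_len: "2 * card (edges_along E D) \<le> (\<Sum>v\<in>V. length (f v) - 1)"
    using insert.IH insert.prems by auto
  define S where "S = {v \<in> V. {v, flip k v} \<in> E}"
  define g where "g v = (if v \<in> S then v # f (flip k v) else f v)" for v
  have flip_S: "flip k v \<in> S" if "v \<in> S" for v
    using that cube_subgraph_edge(3)[OF sub] by (auto simp: S_def insert_commute)
  have "S \<subseteq> V" by (simp add: S_def)
  have g: "\<forall>v\<in>V. geodesic_in_dirs V E (insert k D) (g v) \<and> hd (g v) = v"
  proof
    fix v assume "v \<in> V"
    show "geodesic_in_dirs V E (insert k D) (g v) \<and> hd (g v) = v"
    proof (cases "v \<in> S")
      case True
      then have "flip k v \<in> V" using flip_S \<open>S \<subseteq> V\<close> by blast
      then show ?thesis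
        using geodesic_in_dirs_Cons[OF sub _ insert.hyps(2) \<open>k < n\<close> _ \<open>v \<in> V\<close>] f True
        by (auto simp: g_def S_def)
    next
      case False
      then show ?thesis using f \<open>v \<in> V\<close> by (auto simp: g_def geodesic_in_dirs_def)
    qed
  qed
  have "f v \<noteq> []" if "v \<in> V" for v
    using f that by (auto simp: geodesic_in_dirs_def is_geodesic_def is_path_def)
  then have "(\<Sum>v\<in>V. length (g v) - 1) = (\<Sum>v\<in>V. length (f v) - 1) + card S"
    unfolding g_def
    by (intro sum_length_Cons_involution cube_subgraph_finite(1)[OF sub] \<open>S \<subseteq> V\<close> flip_S) auto
  moreover have "card (edges_along E (insert k D)) = card (edges_along E D) + card (edges_along E {k})"
    using card_edges_along_insert[OF cube_subgraph_finite(2)[OF sub] insert.hyps(2)] .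
  ultimately show ?case
    using g f_len card_endpoints_along[OF sub \<open>k < n\<close>] by (intro exI[of _ g]) (simp add: S_def)
qed

lemma exists_ge_average:
  fixes h :: "'a \<Rightarrow> real" and c :: real
  assumes "finite A" "A \<noteq> {}" "c * card A \<le> sum h A"
  shows "\<exists>a\<in>A. c \<le> h a"
proof (rule ccontr)
  assume "\<not> ?thesis"
  then have "sum h A < (\<Sum>a\<in>A. c)"
    by (intro sum_strict_mono[OF assms(1,2)]) (simp add: not_le)
  with assms(3) show False by (simp add: mult.commute)
qed

theorem theorem2:
  fixes n :: nat and V :: "bool list set" and E :: "bool list set set"
  assumes "n \<ge> 1" and "cube_subgraph n V E" and "V \<noteq> {}"
  shows "\<exists>p. is_geodesic V E p \<and> real (length p - 1) \<ge> avg_degree V E"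
proof -
  obtain f where f: "\<forall>v\<in>V. geodesic_in_dirs V E {..<n} (f v)"
    and f_len: "2 * card E \<le> (\<Sum>v\<in>V. length (f v) - 1)"
    using geodesics_in_dirs_total_length[OF assms(2), of "{..<n}"] edges_along_all[OF assms(2)]
    by auto
  have "finite V" using cube_subgraph_finite(1)[OF assms(2)] .
  then have "avg_degree V E * card V \<le> (\<Sum>v\<in>V. real (length (f v) - 1))"
    using f_len assms(3) unfolding avg_degree_def by (simp flip: of_nat_sum)
  then obtain v where "v \<in> V" "avg_degree V E \<le> real (length (f v) - 1)"
    using exists_ge_average[OF \<open>finite V\<close> assms(3)] by blast
  with f show ?thesis
    unfolding geodesic_in_dirs_def by blast
qed

end
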